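(* Let $p$ be an odd prime, let $d>1$ be an integer, and let $q$ be an even power of $p$ with $q \equiv 1 \pmod{2d}$. The subfield $\mathbb{F}_{\sqrt{q}}$ of $\mathbb{F}_q$ forms a clique in the generalized Paley graph $GP(q,d)$ if and only if $d \mid (\sqrt{q}+1)$.
   Context: For a prime power $q$ and an integer $d>1$ with $d \mid q-1$, the $d$-Paley graph $GP(q,d)$ is the graph with vertex set $\mathbb{F}_q$ in which two distinct vertices $x,y$ are adjacent if and only if $x-y$ is a $d$-th power in $\mathbb{F}_q^*$. *)

theory Defs
  imports "HOL-Computational_Algebra.Primes" "HOL-Library.Cardinality" "HOL-Number_Theory.Cong"
begin

definition gp_adj :: "nat \<Rightarrow> 'a::field \<Rightarrow> 'a \<Rightarrow> bool" where
  "gp_adj d x y \<longleftrightarrow> x \<noteq> y \<and> (\<exists>z. z \<noteq> 0 \<and> x - y = z ^ d)"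

definition gp_clique :: "nat \<Rightarrow> 'a::field set \<Rightarrow> bool" where
  "gp_clique d S \<longleftrightarrow> (\<forall>x\<in>S. \<forall>y\<in>S. x \<noteq> y \<longrightarrow> gp_adj d x y)"

definition is_subfield :: "'a::field set \<Rightarrow> bool" where
  "is_subfield S \<longleftrightarrow> 0 \<in> S \<and> 1 \<in> S \<and>
     (\<forall>x\<in>S. \<forall>y\<in>S. x + y \<in> S \<and> x * y \<in> S) \<and>
     (\<forall>x\<in>S. - x \<in> S) \<and> (\<forall>x\<in>S. x \<noteq> 0 \<longrightarrow> inverse x \<in> S)"

end

theory Submission
  imports Defs "HOL-Computational_Algebra.Polynomial"
begin

text \<open>
  Let \<open>r = p\<^sup>k\<close>, so \<open>q - 1 = (r - 1)(r + 1)\<close> and \<open>d\<close> divides \<open>q - 1\<close>. Since differences of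
  elements of the subfield \<open>S\<close> range over \<open>S\<close>, \<open>S\<close> is a clique iff every nonzero element of \<open>S\<close>
  is a \<open>d\<close>-th power, i.e. (Euler's criterion) iff \<open>x\<^bsup>(q-1)/d\<^esup> = 1\<close> on \<open>S\<^sup>*\<close>. As \<open>S\<^sup>*\<close> is a group of
  order \<open>r - 1\<close> whose elements are among the roots of \<open>X\<^sup>m - 1\<close> for \<open>m = (q-1)/d mod (r-1)\<close>,
  this holds iff \<open>r - 1\<close> divides \<open>(q - 1)/d\<close>, i.e. iff \<open>d\<close> divides \<open>r + 1\<close>.
\<close>

lemma card_le_card_image_mult:
  assumes "finite A" and "\<And>y. y \<in> f ` A \<Longrightarrow> card {x\<in>A. f x = y} \<le> m"
  shows "card A \<le> card (f ` A) * m"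
proof -
  have "A = (\<Union>y\<in>f ` A. {x\<in>A. f x = y})" by blast
  then have "card A \<le> (\<Sum>y\<in>f ` A. card {x\<in>A. f x = y})"
    by (metis card_UN_le assms(1) finite_imageI)
  also have "\<dots> \<le> (\<Sum>y\<in>f ` A. m)" by (rule sum_mono) (rule assms(2))
  finally show ?thesis by simp
qed

lemma
  fixes c :: "'a::idom"
  assumes "m \<ge> 1"
  shows finite_roots_power_eq: "finite {x. x ^ m = c}"
    and card_roots_power_eq_le: "card {x. x ^ m = c} \<le> m"
proof -
  define P where "P = monom (1::'a) m + [:-c:]"
  have deg: "degree P = m" unfolding P_def using assms
    by (subst degree_add_eq_left) (auto simp: degree_monom_eq)
  then have "P \<noteq> 0" using assms by auto
  have roots: "{x. x ^ m = c} = {x. poly P x = 0}" unfolding P_def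
    by (auto simp: poly_monom)
  show "finite {x. x ^ m = c}" unfolding roots by (rule poly_roots_finite) fact
  show "card {x. x ^ m = c} \<le> m" using card_poly_roots_bound[OF \<open>P \<noteq> 0\<close>] deg roots by simp
qed

lemma power_card_eq_one:
  fixes T :: "'a::idom set"
  assumes "finite T" and "0 \<notin> T" and "\<And>x y. x \<in> T \<Longrightarrow> y \<in> T \<Longrightarrow> x * y \<in> T" and "x \<in> T"
  shows "x ^ card T = 1"
proof -
  have inj: "inj_on ((*) x) T" using assms(2,4) by (auto simp: inj_on_def)
  have "(*) x ` T \<subseteq> T" using assms(3,4) by auto
  then have "(*) x ` T = T"
    using card_subset_eq[OF assms(1)] card_image[OF inj] by simp
  then have "prod id T = prod ((*) x) T"
    using prod.reindex[OF inj, of id] by simp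
  also have "\<dots> = x ^ card T * prod id T" by (simp add: prod.distrib)
  finally have "x ^ card T * prod id T = 1 * prod id T" by simp
  moreover have "prod id T \<noteq> 0" using assms(1,2) by (simp add: prod_zero_iff)
  ultimately show ?thesis by (simp only: mult_cancel_right) simp
qed

lemma power_card_minus_one_eq_one:
  fixes x :: "'a::{idom,finite}"
  assumes "x \<noteq> 0"
  shows "x ^ (CARD('a) - 1) = 1"
  using power_card_eq_one[of "UNIV - {0}" x] assms by (simp add: card_Diff_singleton)

text \<open>The direction \<open>\<Longrightarrow>\<close> reduces the exponent modulo \<open>card T\<close>; a nonzero remainder would give
  more than \<open>m mod card T\<close> roots of \<open>X\<^bsup>m mod card T\<^esup> - 1\<close>.\<close>
lemma power_eq_one_on_group_iff_card_dvd:
  fixes T :: "'a::idom set"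
  assumes "finite T" and "T \<noteq> {}" and "0 \<notin> T" and "\<And>x y. x \<in> T \<Longrightarrow> y \<in> T \<Longrightarrow> x * y \<in> T"
  shows "(\<forall>x\<in>T. x ^ m = 1) \<longleftrightarrow> card T dvd m"
proof
  assume pow_m: "\<forall>x\<in>T. x ^ m = 1"
  let ?n = "card T"
  have pow_mod: "x ^ (m mod ?n) = 1" if "x \<in> T" for x
  proof -
    have "x ^ m = (x ^ ?n) ^ (m div ?n) * x ^ (m mod ?n)"
      unfolding power_mult[symmetric] power_add[symmetric] by simp
    then show ?thesis using pow_m power_card_eq_one[OF assms(1,3,4) that] that by simp
  qed
  show "?n dvd m"
  proof (rule ccontr)
    assume "\<not> ?n dvd m"
    then have "m mod ?n \<ge> 1" by (simp add: dvd_eq_mod_eq_0)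
    have "?n \<le> card {x::'a. x ^ (m mod ?n) = 1}"
      using pow_mod finite_roots_power_eq[OF \<open>m mod ?n \<ge> 1\<close>] by (intro card_mono) auto
    also have "\<dots> \<le> m mod ?n" by (rule card_roots_power_eq_le) fact
    also have "\<dots> < ?n" using assms(1,2) by (simp add: card_gt_0_iff)
    finally show False by simp
  qed
next
  assume "card T dvd m"
  then show "\<forall>x\<in>T. x ^ m = 1"
    using power_card_eq_one[OF assms(1,3,4)] by (auto elim!: dvdE simp: power_mult)
qed

text \<open>The nonzero \<open>d\<close>-th powers lie among the \<open>(q-1)/d\<close> roots of
  \<open>X\<^bsup>(q-1)/d\<^esup> - 1\<close>, and there are at least \<open>(q-1)/d\<close> of them because each has at most \<open>d\<close> roots.\<close>
lemma nth_power_iff_power_eq_one: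
  fixes w :: "'a::{field,finite}"
  assumes "d dvd CARD('a) - 1"
  shows "(\<exists>z. z \<noteq> 0 \<and> w = z ^ d) \<longleftrightarrow> w ^ ((CARD('a) - 1) div d) = 1"
proof -
  define N where "N = CARD('a) - 1"
  define M where "M = N div d"
  have "card {0::'a, 1} \<le> CARD('a)" by (rule card_mono) auto
  then have "N > 0" unfolding N_def by simp
  have "d > 0" using assms \<open>N > 0\<close> unfolding N_def by (cases "d = 0") auto
  then have N_eq: "N = M * d" using assms unfolding M_def N_def by simp
  then have "M \<ge> 1" using \<open>N > 0\<close> by (cases M) auto
  have fermat: "(z ^ d) ^ M = 1" if "z \<noteq> 0" for z :: 'a
    using power_card_minus_one_eq_one[OF that] unfolding N_def[symmetric] N_eq
    by (simp add: mult.commute power_mult[symmetric])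
  define D where "D = (\<lambda>z. z ^ d) ` (UNIV - {0::'a})"
  define R where "R = {x::'a. x ^ M = 1}"
  have D_sub_R: "D \<subseteq> R" using fermat unfolding D_def R_def by auto
  have "card (UNIV - {0::'a}) \<le> card D * d"
    unfolding D_def
  proof (rule card_le_card_image_mult)
    fix y :: 'a
    have "card {x \<in> UNIV - {0}. x ^ d = y} \<le> card {x. x ^ d = y}"
      using finite_roots_power_eq[of d y] \<open>d > 0\<close> by (intro card_mono) auto
    also have "\<dots> \<le> d" using card_roots_power_eq_le[of d y] \<open>d > 0\<close> by simp
    finally show "card {x \<in> UNIV - {0}. x ^ d = y} \<le> d" .
  qed simp
  then have "N \<le> card D * d" unfolding N_def by (simp add: card_Diff_singleton)
  then have "card R \<le> card D"
    using card_roots_power_eq_le[OF \<open>M \<ge> 1\<close>, of "1::'a"] \<open>d > 0\<close> unfolding N_eq R_def by simp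
  then have "D = R" using D_sub_R card_mono[OF finite D_sub_R] by (intro card_subset_eq) auto
  then show ?thesis
    using fermat unfolding D_def R_def M_def N_def[symmetric] by auto
qed

lemma gp_clique_subfield_iff:
  assumes "is_subfield S"
  shows "gp_clique d S \<longleftrightarrow> (\<forall>x\<in>S - {0}. \<exists>z. z \<noteq> 0 \<and> x = z ^ d)"
proof
  assume "gp_clique d S"
  then show "\<forall>x\<in>S - {0}. \<exists>z. z \<noteq> 0 \<and> x = z ^ d"
    using assms unfolding gp_clique_def gp_adj_def is_subfield_def by (metis DiffE diff_zero insertI1)
next
  assume powers: "\<forall>x\<in>S - {0}. \<exists>z. z \<noteq> 0 \<and> x = z ^ d"
  have "x - y \<in> S" if "x \<in> S" "y \<in> S" for x y
    using assms that unfolding is_subfield_def by (metis diff_conv_add_uminus)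
  then show "gp_clique d S"
    using powers unfolding gp_clique_def gp_adj_def by auto
qed

lemma subfield_units_closed:
  assumes "is_subfield S"
  shows "S - {0} \<noteq> {}" and "x \<in> S - {0} \<Longrightarrow> y \<in> S - {0} \<Longrightarrow> x * y \<in> S - {0}"
  using assms unfolding is_subfield_def by auto

theorem lemma1p5:
  fixes p k d :: nat and S :: "'a::{field,finite} set"
  assumes "prime p" and "odd p" and "k \<ge> 1" and "d > 1"
    and "CARD('a) = p ^ (2 * k)"
    and "[p ^ (2 * k) = 1] (mod (2 * d))"
    and "is_subfield S" and "card S = p ^ k"
  shows "gp_clique d S \<longleftrightarrow> d dvd (p ^ k + 1)"
proof -
  define r where "r = p ^ k"
  have "r > 1" unfolding r_def using one_less_power[OF prime_gt_1_nat[OF assms(1)]] assms(3) by simp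
  have N_eq: "CARD('a) - 1 = (r - 1) * (r + 1)"
    using assms(5) \<open>r > 1\<close> unfolding r_def
    by (simp add: power_mult power2_eq_square power_mult_distrib algebra_simps)
  have "d dvd CARD('a) - 1"
    using cong_to_1_nat[OF assms(6)] assms(5) by (simp add: dvd_mult_right)
  have card_units: "card (S - {0}) = r - 1"
    using assms(7,8) unfolding r_def is_subfield_def by (simp add: card_Diff_singleton)
  have "gp_clique d S \<longleftrightarrow> (\<forall>x\<in>S - {0}. x ^ ((CARD('a) - 1) div d) = 1)"
    using gp_clique_subfield_iff[OF assms(7)] nth_power_iff_power_eq_one[OF \<open>d dvd _\<close>] by simp
  also have "\<dots> \<longleftrightarrow> (r - 1) dvd (CARD('a) - 1) div d"
    using power_eq_one_on_group_iff_card_dvd[of "S - {0}"] subfield_units_closed[OF assms(7)]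
    by (simp add: card_units)
  also have "\<dots> \<longleftrightarrow> (r - 1) * d dvd (r - 1) * (r + 1)"
    using \<open>d dvd _\<close> assms(4) unfolding N_eq by (intro dvd_div_iff_mult) auto
  also have "\<dots> \<longleftrightarrow> d dvd r + 1" using \<open>r > 1\<close> by (intro dvd_times_left_cancel_iff) simp
  finally show ?thesis unfolding r_def .
qed

end
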